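(* Let $k\le n\le m<\phi(k)$. Then the value in $U_q^+(\mathfrak{sp}_{2n})$ of the bracketed word $[y_k\,x_n\,x_{n+1}\cdots x_m]$, where $y_k=v[k,n-1]=[[\dots[x_k,x_{k+1}],\dots],x_{n-1}]$, does not depend on the arrangement of the (skew) brackets on the sequence $y_k,x_n,x_{n+1},\dots,x_m$.
   Context: Let $\mathbf{k}$ be a field, $G$ an abelian group, $n\ge2$, $X=\{x_1,\dots,x_n\}$, $g_i\in G$, characters $\chi^i:G\to\mathbf{k}^*$, $p_{ij}=\chi^i(g_j)$; for homogeneous $u,v$, $p(u,v)=\chi^u(g_v)$ (obtained by replacing $x_i$ by $g_i$, resp. $\chi^i$). $G\langle X\rangle$: skew group algebra with $x_ig=\chi^i(g)gx_i$; skew bracket $[u,v]=uv-p(u,v)vu$. Fix $q\in\mathbf{k}^*$, $q^3\ne1$, $q\ne-1$; assume $p_{ii}=q$ ($i<n$), $p_{nn}=q^2$, $p_{i,i-1}p_{i-1,i}=q^{-1}$ ($1<i<n$), $p_{n-1,n}p_{n,n-1}=q^{-2}$, $p_{ij}p_{ji}=1$ ($j>i+1$). $U_q^+(\mathfrak{sp}_{2n})$ is the quotient of $G\langle X\rangle$ by the ideal generated by $[x_i,[x_i,x_{i+1}]]$, $[[x_i,x_{i+1}],x_{i+1}]$ ($1\le i<n-1$), $[x_i,x_j]$ ($j>i+1$), $[[x_{n-1},x_n],x_n]$, $[x_{n-1},[x_{n-1},[x_{n-1},x_n]]]$. For $n<i<2n$, $x_i:=x_{2n-i}$; $\phi(i)=2n-i$.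 *)

theory Defs
  imports Main
begin

text \<open>Noncommutative polynomials k<X> over letters x_i (indexed by nat), represented as
  coefficient functions on words. Only finitely supported ones are genuine polynomials.\<close>

type_synonym 'k ncpoly = "nat list \<Rightarrow> 'k"

definition fin_supp :: "'k::zero ncpoly \<Rightarrow> bool" where
  "fin_supp f \<longleftrightarrow> finite {w. f w \<noteq> 0}"

definition mono :: "nat list \<Rightarrow> 'k::{zero,one} ncpoly" where
  "mono u = (\<lambda>w. if w = u then 1 else 0)"

definition pmul :: "'k::semiring_0 ncpoly \<Rightarrow> 'k ncpoly \<Rightarrow> 'k ncpoly" where
  "pmul f h = (\<lambda>w. \<Sum>i\<le>length w. f (take i w) * h (drop i w))"

text \<open>Binary trees: bracketings.\<close>
datatype 'a btree = Lf 'a | Br "'a btree" "'a btree"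

fun leaves :: "'a btree \<Rightarrow> 'a list" where
  "leaves (Lf a) = [a]"
| "leaves (Br s t) = leaves s @ leaves t"

fun subst_tree :: "'a btree btree \<Rightarrow> 'a btree" where
  "subst_tree (Lf t) = t"
| "subst_tree (Br s t) = Br (subst_tree s) (subst_tree t)"

text \<open>p(u,v) = chi^u(g_v) for words u v (degrees): chi^u is the product of the characters
  of the letters of u, g_v the product (written additively) of the group elements of v.\<close>
definition pp :: "(nat \<Rightarrow> 'g::ab_group_add \<Rightarrow> 'k::field) \<Rightarrow> (nat \<Rightarrow> 'g) \<Rightarrow> nat list \<Rightarrow> nat list \<Rightarrow> 'k" where
  "pp chi g u v = (\<Prod>i\<leftarrow>u. chi i (\<Sum>j\<leftarrow>v. g j))"

text \<open>Value of a bracketed word (leaves are letter indices) with skew brackets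
  [u,v] = uv - p(u,v) vu.\<close>
fun bval :: "(nat \<Rightarrow> 'g::ab_group_add \<Rightarrow> 'k::field) \<Rightarrow> (nat \<Rightarrow> 'g) \<Rightarrow> nat btree \<Rightarrow> 'k ncpoly" where
  "bval chi g (Lf i) = mono [i]"
| "bval chi g (Br s t) =
     (\<lambda>w. pmul (bval chi g s) (bval chi g t) w
          - pp chi g (leaves s) (leaves t) * pmul (bval chi g t) (bval chi g s) w)"

inductive_set ideal_gen :: "'k::comm_ring ncpoly set \<Rightarrow> 'k ncpoly set" for R where
  zero: "(\<lambda>_. 0) \<in> ideal_gen R"
| gen: "r \<in> R \<Longrightarrow> fin_supp a \<Longrightarrow> fin_supp b \<Longrightarrow> pmul (pmul a r) b \<in> ideal_gen R"
| add: "x \<in> ideal_gen R \<Longrightarrow> y \<in> ideal_gen R \<Longrightarrow> (\<lambda>w. x w + y w) \<in> ideal_gen R"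

definition sp_rel_trees :: "nat \<Rightarrow> nat btree set" where
  "sp_rel_trees n =
     {Br (Lf i) (Br (Lf i) (Lf (i+1))) | i. 1 \<le> i \<and> i < n - 1}
   \<union> {Br (Br (Lf i) (Lf (i+1))) (Lf (i+1)) | i. 1 \<le> i \<and> i < n - 1}
   \<union> {Br (Lf i) (Lf j) | i j. 1 \<le> i \<and> i + 1 < j \<and> j \<le> n}
   \<union> {Br (Br (Lf (n-1)) (Lf n)) (Lf n),
      Br (Lf (n-1)) (Br (Lf (n-1)) (Br (Lf (n-1)) (Lf n)))}"

definition Uq_ideal :: "(nat \<Rightarrow> 'g::ab_group_add \<Rightarrow> 'k::field) \<Rightarrow> (nat \<Rightarrow> 'g) \<Rightarrow> nat \<Rightarrow> 'k ncpoly set" where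
  "Uq_ideal chi g n = ideal_gen (bval chi g ` sp_rel_trees n)"

text \<open>x_i := x_{2n-i} for n < i < 2n.\<close>
definition letter :: "nat \<Rightarrow> nat \<Rightarrow> nat" where
  "letter n i = (if i \<le> n then i else 2*n - i)"

definition phi :: "nat \<Rightarrow> nat \<Rightarrow> nat" where
  "phi n i = 2*n - i"

text \<open>v[k,n-1] = [[...[x_k,x_{k+1}],...],x_{n-1}] (left-normed), for k < n.\<close>
definition v_tree :: "nat \<Rightarrow> nat \<Rightarrow> nat btree" where
  "v_tree k l = foldl (\<lambda>t i. Br t (Lf i)) (Lf k) [k+1..<l+1]"

text \<open>The sequence y_k, x_n, x_{n+1}, ..., x_m (y_k omitted when k = n, as v[n,n-1] is empty).\<close>
definition items :: "nat \<Rightarrow> nat \<Rightarrow> nat \<Rightarrow> nat btree list" where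
  "items n k m = (if k < n then [v_tree k (n-1)] else [])
                 @ map (\<lambda>i. Lf (letter n i)) [n..<m+1]"

end

theory Submission
  imports Defs
begin

text \<open>Modulo a two-sided ideal J, the skew Jacobi identity shows that the skew bracket is
  associative on a triple u, v, w as soon as [u, w] lies in J. Hence, if [u_i, u_j] lies in J
  for all non-adjacent i < j, any bracketing of u_1 ... u_m can be rotated into the left-normed
  one. For the sequence y_k, x_n, x_(n-1), ..., x_(2n-m) these brackets do vanish in U_q^+(sp_2n):
  for two letters x_i, x_j with i > j + 1 this is a defining relation up to a scalar, and
  [v[k,l], x_j] = 0 for k < j <= l < n follows from the quantum Serre relations, the only
  non-routine case being [[[x_c, x_(c+1)], x_(c+2)], x_(c+1)] = 0.\<close>

section \<open>The ring of finitely supported noncommutative polynomials\<close>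

lemma fin_supp_mono: "fin_supp (mono u :: 'k::{zero,one} ncpoly)"
  unfolding fin_supp_def mono_def by (rule finite_subset[of _ "{u}"]) auto

lemma fin_supp_zero: "fin_supp (\<lambda>_. 0)"
  unfolding fin_supp_def by simp

lemma fin_supp_add: "fin_supp f \<Longrightarrow> fin_supp h \<Longrightarrow> fin_supp (\<lambda>w. f w + h w :: 'k::comm_monoid_add)"
  unfolding fin_supp_def by (rule finite_subset[of _ "{w. f w \<noteq> 0} \<union> {w. h w \<noteq> 0}"]) auto

lemma fin_supp_uminus: "fin_supp f \<Longrightarrow> fin_supp (\<lambda>w. - f w :: 'k::ab_group_add)"
  unfolding fin_supp_def by simp

lemma fin_supp_diff: "fin_supp f \<Longrightarrow> fin_supp h \<Longrightarrow> fin_supp (\<lambda>w. f w - h w :: 'k::ab_group_add)"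
  unfolding fin_supp_def by (rule finite_subset[of _ "{w. f w \<noteq> 0} \<union> {w. h w \<noteq> 0}"]) auto

lemma fin_supp_smult: "fin_supp f \<Longrightarrow> fin_supp (\<lambda>w. c * f w :: 'k::semiring_0)"
  unfolding fin_supp_def by (rule finite_subset[of _ "{w. f w \<noteq> 0}"]) auto

lemma fin_supp_pmul:
  assumes "fin_supp f" "fin_supp h"
  shows "fin_supp (pmul f h)"
proof -
  let ?S = "(\<lambda>(u, v). u @ v) ` ({w. f w \<noteq> 0} \<times> {w. h w \<noteq> 0})"
  have "{w. pmul f h w \<noteq> 0} \<subseteq> ?S"
  proof
    fix w assume "w \<in> {w. pmul f h w \<noteq> 0}"
    then obtain i where "f (take i w) * h (drop i w) \<noteq> 0"
      unfolding pmul_def by (auto elim: sum.not_neutral_contains_not_neutral)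
    then show "w \<in> ?S"
      by (auto intro!: image_eqI[of _ _ "(take i w, drop i w)"])
  qed
  moreover have "finite ?S" using assms unfolding fin_supp_def by simp
  ultimately show ?thesis unfolding fin_supp_def by (rule finite_subset)
qed

lemma pmul_assoc: "pmul (pmul f g) h = pmul f (pmul g h :: 'k::semiring_0 ncpoly)"
proof
  fix w :: "nat list"
  let ?L = "length w"
  define G where "G = (\<lambda>j i. f (take j w) * g (take i (drop j w)) * h (drop (j + i) w))"
  have "pmul (pmul f g) h w = (\<Sum>k\<le>?L. \<Sum>j\<le>k. G j (k - j))"
    unfolding pmul_def G_def
    by (auto simp: sum_distrib_right min_def take_drop intro!: sum.cong)
  also have "\<dots> = (\<Sum>(j, i)\<in>{(j, i). j + i \<le> ?L}. G j i)"
    by (rule sum.triangle_reindex_eq[symmetric])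
  also have "{(j, i). j + i \<le> ?L} = Sigma {..?L} (\<lambda>j. {..?L - j})" by auto
  also have "(\<Sum>(j, i)\<in>Sigma {..?L} (\<lambda>j. {..?L - j}). G j i) = (\<Sum>j\<le>?L. \<Sum>i\<le>?L - j. G j i)"
    by (rule sum.Sigma[symmetric]) auto
  also have "\<dots> = pmul f (pmul g h) w"
    unfolding pmul_def G_def
    by (auto simp: sum_distrib_left mult.assoc add.commute intro!: sum.cong)
  finally show "pmul (pmul f g) h w = pmul f (pmul g h) w" .
qed

lemma pmul_mono_Nil_left: "pmul (mono []) f = (f :: 'k::semiring_1 ncpoly)"
proof
  fix w
  have "pmul (mono []) f w = (\<Sum>i\<le>length w. if i = 0 then f w else 0)"
    unfolding pmul_def mono_def by (rule sum.cong) auto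
  then show "pmul (mono []) f w = f w" by simp
qed

lemma pmul_mono_Nil_right: "pmul f (mono []) = (f :: 'k::semiring_1 ncpoly)"
proof
  fix w
  have "pmul f (mono []) w = (\<Sum>i\<le>length w. if i = length w then f w else 0)"
    unfolding pmul_def mono_def by (rule sum.cong) auto
  then show "pmul f (mono []) w = f w" by simp
qed

lemma pmul_mono_mono: "pmul (mono u) (mono v) = (mono (u @ v) :: 'k::semiring_1 ncpoly)"
proof
  fix w
  have "pmul (mono u :: 'k ncpoly) (mono v) w
      = (\<Sum>i\<le>length w. if i = length u \<and> w = u @ v then 1 else 0)"
    unfolding pmul_def mono_def by (intro sum.cong refl) (auto simp: min_def)
  then show "pmul (mono u) (mono v) w = (mono (u @ v) :: 'k ncpoly) w"
    unfolding mono_def by (auto simp: sum.delta)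
qed

lemma pmul_smult_left: "pmul (\<lambda>w. s * a w) r = (\<lambda>w. s * pmul a r w :: 'k::comm_semiring_0)"
  by (simp add: pmul_def fun_eq_iff sum_distrib_left mult.assoc)

typedef (overloaded) 'k fpoly = "{f :: 'k::comm_ring_1 ncpoly. fin_supp f}"
  morphisms coeff Abs_fpoly
  using fin_supp_zero by blast

setup_lifting type_definition_fpoly

instantiation fpoly :: (comm_ring_1) ring_1
begin
lift_definition zero_fpoly :: "'a fpoly" is "\<lambda>_. 0" by (rule fin_supp_zero)
lift_definition one_fpoly :: "'a fpoly" is "mono []" by (rule fin_supp_mono)
lift_definition plus_fpoly :: "'a fpoly \<Rightarrow> 'a fpoly \<Rightarrow> 'a fpoly" is "\<lambda>f h w. f w + h w"
  by (rule fin_supp_add)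
lift_definition minus_fpoly :: "'a fpoly \<Rightarrow> 'a fpoly \<Rightarrow> 'a fpoly" is "\<lambda>f h w. f w - h w"
  by (rule fin_supp_diff)
lift_definition uminus_fpoly :: "'a fpoly \<Rightarrow> 'a fpoly" is "\<lambda>f w. - f w" by (rule fin_supp_uminus)
lift_definition times_fpoly :: "'a fpoly \<Rightarrow> 'a fpoly \<Rightarrow> 'a fpoly" is pmul by (rule fin_supp_pmul)
instance
proof
  fix a b c :: "'a fpoly"
  show "a + b + c = a + (b + c)" by transfer (simp add: add.assoc)
  show "a + b = b + a" by transfer (simp add: add.commute)
  show "0 + a = a" by transfer simp
  show "- a + a = 0" by transfer simp
  show "a - b = a + - b" by transfer simp
  show "a * b * c = a * (b * c)" by transfer (rule pmul_assoc)
  show "1 * a = a" by transfer (rule pmul_mono_Nil_left)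
  show "a * 1 = a" by transfer (rule pmul_mono_Nil_right)
  show "(a + b) * c = a * c + b * c" by transfer (simp add: pmul_def distrib_right sum.distrib)
  show "a * (b + c) = a * b + a * c" by transfer (simp add: pmul_def distrib_left sum.distrib)
  show "(0::'a fpoly) \<noteq> 1" by transfer (auto simp: mono_def fun_eq_iff)
qed
end

lift_definition smult :: "'k::comm_ring_1 \<Rightarrow> 'k fpoly \<Rightarrow> 'k fpoly" is "\<lambda>c f w. c * f w"
  by (rule fin_supp_smult)

lift_definition monomial :: "nat list \<Rightarrow> 'k::comm_ring_1 fpoly" is mono by (rule fin_supp_mono)

lemma smult_mult_left [simp]: "smult c x * y = smult c (x * y)"
  by transfer (simp add: pmul_def sum_distrib_left mult.assoc)

lemma smult_mult_right [simp]: "x * smult c y = smult c (x * y)"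
  by transfer (simp add: pmul_def sum_distrib_left mult.left_commute)

lemma smult_smult [simp]: "smult a (smult b x) = smult (a * b) x"
  by transfer (simp add: mult.assoc)

lemma smult_add_right [simp]: "smult a (x + y) = smult a x + smult a y"
  by transfer (simp add: distrib_left)

lemma smult_diff_right [simp]: "smult a (x - y) = smult a x - smult a y"
  by transfer (simp add: right_diff_distrib)

lemma smult_one [simp]: "smult 1 x = x"
  by transfer simp

lemma monomial_mult: "monomial u * monomial v = monomial (u @ v)"
  by transfer (rule pmul_mono_mono)

lemma coeff_add [simp]: "coeff (x + y) w = coeff x w + coeff y w" by transfer simp
lemma coeff_diff [simp]: "coeff (x - y) w = coeff x w - coeff y w" by transfer simp
lemma coeff_smult [simp]: "coeff (smult c x) w = c * coeff x w" by transfer simp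
lemma coeff_monomial [simp]: "coeff (monomial u) w = (if w = u then 1 else 0)"
  by transfer (simp add: mono_def)

section \<open>The two-sided ideal generated by a set\<close>

lemma ideal_gen_pmul_left:
  assumes "x \<in> ideal_gen R" "fin_supp c"
  shows "pmul c x \<in> ideal_gen R"
  using assms(1)
proof induction
  case zero
  then show ?case by (simp add: pmul_def ideal_gen.zero)
next
  case (gen r a b)
  then show ?case
    using assms(2) by (simp add: pmul_assoc[symmetric] ideal_gen.gen fin_supp_pmul)
next
  case (add x y)
  then show ?case
    by (simp add: pmul_def distrib_left sum.distrib ideal_gen.add[unfolded pmul_def])
qed

lemma ideal_gen_pmul_right:
  assumes "x \<in> ideal_gen R" "fin_supp c"
  shows "pmul x c \<in> ideal_gen R"
  using assms(1)
proof induction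
  case zero
  then show ?case by (simp add: pmul_def ideal_gen.zero)
next
  case (gen r a b)
  have "pmul (pmul (pmul a r) b) c = pmul (pmul a r) (pmul b c)" by (simp add: pmul_assoc)
  then show ?case using gen assms(2) by (simp add: ideal_gen.gen fin_supp_pmul)
next
  case (add x y)
  then show ?case
    by (simp add: pmul_def distrib_right sum.distrib ideal_gen.add[unfolded pmul_def])
qed

lemma ideal_gen_smult:
  assumes "x \<in> ideal_gen R"
  shows "(\<lambda>w. s * x w) \<in> ideal_gen R"
  using assms
proof induction
  case zero
  then show ?case by (simp add: ideal_gen.zero)
next
  case (gen r a b)
  have "(\<lambda>w. s * pmul (pmul a r) b w) = pmul (pmul (\<lambda>w. s * a w) r) b"
    by (simp add: pmul_smult_left)
  then show ?case using gen by (simp add: ideal_gen.gen fin_supp_smult)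
next
  case (add x y)
  then show ?case using ideal_gen.add by (simp add: distrib_left)
qed

lemma ideal_gen_generator:
  assumes "(r :: 'k::comm_ring_1 ncpoly) \<in> R" "fin_supp r"
  shows "r \<in> ideal_gen R"
  using ideal_gen.gen[OF assms(1) fin_supp_mono[of "[]"] fin_supp_mono[of "[]"]]
  by (simp add: pmul_mono_Nil_left pmul_mono_Nil_right)

definition in_ideal :: "'k::comm_ring_1 ncpoly set \<Rightarrow> 'k fpoly \<Rightarrow> bool" where
  "in_ideal R x \<longleftrightarrow> coeff x \<in> ideal_gen R"

lemma in_ideal_zero: "in_ideal R 0"
  unfolding in_ideal_def zero_fpoly.rep_eq by (rule ideal_gen.zero)

lemma in_ideal_add: "in_ideal R x \<Longrightarrow> in_ideal R y \<Longrightarrow> in_ideal R (x + y)"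
  unfolding in_ideal_def plus_fpoly.rep_eq by (rule ideal_gen.add)

lemma in_ideal_smult: "in_ideal R x \<Longrightarrow> in_ideal R (smult s x)"
  unfolding in_ideal_def smult.rep_eq by (rule ideal_gen_smult)

lemma in_ideal_smult_cancel:
  assumes "c \<noteq> 0" "in_ideal R (smult c x)"
  shows "in_ideal R (x :: 'k::field fpoly)"
  using in_ideal_smult[OF assms(2), of "inverse c"] assms(1) by simp

lemma in_ideal_uminus: "in_ideal R x \<Longrightarrow> in_ideal R (- x)"
proof -
  have "smult (-1) x = - x" by transfer simp
  then show "in_ideal R x \<Longrightarrow> in_ideal R (- x)" using in_ideal_smult[of R x "-1"] by simp
qed

lemma in_ideal_diff: "in_ideal R x \<Longrightarrow> in_ideal R y \<Longrightarrow> in_ideal R (x - y)"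
  using in_ideal_add[of R x "- y"] in_ideal_uminus[of R y] by simp

lemma in_ideal_mult_left: "in_ideal R x \<Longrightarrow> in_ideal R (y * x)"
  unfolding in_ideal_def times_fpoly.rep_eq using coeff by (auto intro: ideal_gen_pmul_left)

lemma in_ideal_mult_right: "in_ideal R x \<Longrightarrow> in_ideal R (x * y)"
  unfolding in_ideal_def times_fpoly.rep_eq using coeff by (auto intro: ideal_gen_pmul_right)

section \<open>Skew brackets modulo an ideal\<close>

definition skew :: "'k::comm_ring_1 \<Rightarrow> 'k fpoly \<Rightarrow> 'k fpoly \<Rightarrow> 'k fpoly" where
  "skew c x y = x * y - smult c (y * x)"

lemma skew_jacobi:
  "skew (b * c) (skew a u v) w - skew (a * b) u (skew c v w)
     = smult c (skew b u w * v) - smult a (v * skew b u w)"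
  by (simp add: skew_def algebra_simps mult.assoc)

lemma skew_derivation_right:
  "skew (b * c) (skew a u v) w
     = u * skew c v w + smult c (skew b u w * v) - smult a (v * skew b u w + smult b (skew c v w * u))"
  by (simp add: skew_def algebra_simps mult.assoc)

lemma skew_derivation_left:
  "skew (a * b) u (skew c v w)
     = skew a u v * w + smult a (v * skew b u w) - smult c (skew b u w * v + smult b (w * skew a u v))"
  by (simp add: skew_def algebra_simps mult.assoc)

fun bvalue :: "(nat \<Rightarrow> 'g::ab_group_add \<Rightarrow> 'k::field) \<Rightarrow> (nat \<Rightarrow> 'g) \<Rightarrow> nat btree \<Rightarrow> 'k fpoly" where
  "bvalue chi g (Lf i) = monomial [i]"
| "bvalue chi g (Br s t) = skew (pp chi g (leaves s) (leaves t)) (bvalue chi g s) (bvalue chi g t)"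

lemma coeff_bvalue: "coeff (bvalue chi g T) = bval chi g T"
  by (induction T)
    (simp_all add: skew_def monomial.rep_eq minus_fpoly.rep_eq times_fpoly.rep_eq smult.rep_eq)

declare bvalue.simps(2) [simp del]

locale skew_brackets =
  fixes chi :: "nat \<Rightarrow> 'g::ab_group_add \<Rightarrow> 'k::field" and g :: "nat \<Rightarrow> 'g"
    and R :: "'k ncpoly set"
  assumes chi_hom: "\<And>i a b. chi i (a + b) = chi i a * chi i b"
    and chi_nz: "\<And>i a. chi i a \<noteq> 0"
begin

abbreviation J :: "'k fpoly \<Rightarrow> bool" where
  "J \<equiv> in_ideal R"

abbreviation val :: "nat btree \<Rightarrow> 'k fpoly" where
  "val \<equiv> bvalue chi g"

definition cong_J :: "'k fpoly \<Rightarrow> 'k fpoly \<Rightarrow> bool" (infix "\<approx>" 50) where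
  "x \<approx> y \<longleftrightarrow> J (x - y)"

lemma cong_refl: "x \<approx> x"
  unfolding cong_J_def by (simp add: in_ideal_zero)

lemma cong_sym: "x \<approx> y \<Longrightarrow> y \<approx> x"
  unfolding cong_J_def using in_ideal_uminus[of R "x - y"] by simp

lemma cong_trans [trans]: "x \<approx> y \<Longrightarrow> y \<approx> z \<Longrightarrow> x \<approx> z"
  unfolding cong_J_def using in_ideal_add[of R "x - y" "y - z"] by simp

lemma cong_in_J: "x \<approx> y \<Longrightarrow> J x \<Longrightarrow> J y"
  unfolding cong_J_def using in_ideal_diff[of R x "x - y"] by simp

lemma chi_zero: "chi i 0 = 1"
  using chi_hom[of i 0 0] chi_nz[of i 0] by simp

lemma pp_eq: "pp chi g u v = (\<Prod>i\<leftarrow>u. \<Prod>j\<leftarrow>v. chi i (g j))"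
proof -
  have "chi i (\<Sum>j\<leftarrow>v. g j) = (\<Prod>j\<leftarrow>v. chi i (g j))" for i
    by (induction v) (simp_all add: chi_zero chi_hom)
  then show ?thesis unfolding pp_def by simp
qed

lemma pp_append_left: "pp chi g (u @ u') v = pp chi g u v * pp chi g u' v"
  unfolding pp_def by simp

lemma pp_append_right: "pp chi g u (v @ v') = pp chi g u v * pp chi g u v'"
  unfolding pp_def by (induction u) (simp_all add: chi_hom mult_ac)

lemma val_Br_assoc:
  assumes "J (val (Br U W))"
  shows "val (Br (Br U V) W) \<approx> val (Br U (Br V W))"
proof -
  let ?a = "pp chi g (leaves U) (leaves V)" and ?c = "pp chi g (leaves V) (leaves W)"
  have "val (Br (Br U V) W) - val (Br U (Br V W))
      = smult ?c (val (Br U W) * val V) - smult ?a (val V * val (Br U W))"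
    by (simp add: bvalue.simps pp_append_left pp_append_right skew_jacobi)
  then show ?thesis unfolding cong_J_def
    by (simp add: assms in_ideal_diff in_ideal_smult in_ideal_mult_left in_ideal_mult_right)
qed

lemma in_J_Br_left:
  assumes UW: "J (val (Br U W))" and VW: "J (val (Br V W))"
  shows "J (val (Br (Br U V) W))"
proof -
  let ?a = "pp chi g (leaves U) (leaves V)" and ?b = "pp chi g (leaves U) (leaves W)"
    and ?c = "pp chi g (leaves V) (leaves W)"
  have "val (Br (Br U V) W) = val U * val (Br V W) + smult ?c (val (Br U W) * val V)
      - smult ?a (val V * val (Br U W) + smult ?b (val (Br V W) * val U))"
    by (simp add: bvalue.simps pp_append_left pp_append_right skew_derivation_right)
  then show ?thesis
    by (simp add: UW VW in_ideal_add in_ideal_diff in_ideal_smult in_ideal_mult_left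
        in_ideal_mult_right)
qed

lemma in_J_Br_right:
  assumes UV: "J (val (Br U V))" and UW: "J (val (Br U W))"
  shows "J (val (Br U (Br V W)))"
proof -
  let ?a = "pp chi g (leaves U) (leaves V)" and ?b = "pp chi g (leaves U) (leaves W)"
    and ?c = "pp chi g (leaves V) (leaves W)"
  have "val (Br U (Br V W)) = val (Br U V) * val W + smult ?a (val V * val (Br U W))
      - smult ?c (val (Br U W) * val V + smult ?b (val W * val (Br U V)))"
    by (simp add: bvalue.simps pp_append_left pp_append_right skew_derivation_left)
  then show ?thesis
    by (simp add: UV UW in_ideal_add in_ideal_diff in_ideal_smult in_ideal_mult_left
        in_ideal_mult_right)
qed

lemma val_Br_cong_left:
  assumes "val A \<approx> val A'" "leaves A = leaves A'"
  shows "val (Br A C) \<approx> val (Br A' C)"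
proof -
  have "val (Br A C) - val (Br A' C)
      = (val A - val A') * val C - smult (pp chi g (leaves A) (leaves C)) (val C * (val A - val A'))"
    using assms(2) by (simp add: bvalue.simps skew_def algebra_simps)
  then show ?thesis using assms(1) unfolding cong_J_def
    by (simp add: in_ideal_diff in_ideal_smult in_ideal_mult_left in_ideal_mult_right)
qed

lemma in_J_Br_cong_left:
  assumes "val X \<approx> val X'" "leaves X = leaves X'" "J (val (Br X' Y))"
  shows "J (val (Br X Y))"
  using cong_in_J[OF cong_sym[OF val_Br_cong_left[OF assms(1,2)]] assms(3)] .

lemma in_J_Br_swap:
  assumes "J (val (Br b a))" "pp chi g (leaves a) (leaves b) * pp chi g (leaves b) (leaves a) = 1"
  shows "J (val (Br a b))"
proof -
  let ?e = "pp chi g (leaves a) (leaves b)"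
  have "val (Br a b) = - smult ?e (val (Br b a))"
    using assms(2) by (simp add: bvalue.simps skew_def algebra_simps)
  then show ?thesis by (simp add: assms(1) in_ideal_uminus in_ideal_smult)
qed

end

section \<open>Independence of the bracketing\<close>

definition lnorm :: "'a list \<Rightarrow> 'a btree" where
  "lnorm xs = foldl (\<lambda>t y. Br t (Lf y)) (Lf (hd xs)) (tl xs)"

lemma lnorm_single: "lnorm [x] = Lf x"
  by (simp add: lnorm_def)

lemma lnorm_snoc: "xs \<noteq> [] \<Longrightarrow> lnorm (xs @ [y]) = Br (lnorm xs) (Lf y)"
  by (cases xs) (simp_all add: lnorm_def)

lemma leaves_lnorm: "xs \<noteq> [] \<Longrightarrow> leaves (lnorm xs) = xs"
proof (induction xs rule: rev_induct)
  case (snoc x xs)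
  then show ?case by (cases "xs = []") (auto simp: lnorm_snoc lnorm_single)
qed simp

lemma leaves_nonempty: "leaves T \<noteq> []"
  by (induction T) auto

lemma leaves_subst_tree: "leaves (subst_tree T) = concat (map leaves (leaves T))"
  by (induction T) auto

context skew_brackets
begin

definition far_commuting :: "nat btree list \<Rightarrow> bool" where
  "far_commuting xs \<longleftrightarrow> (\<forall>i j. i + 1 < j \<longrightarrow> j < length xs \<longrightarrow> J (val (Br (xs ! i) (xs ! j))))"

lemma far_commuting_appendD:
  assumes "far_commuting (xs @ ys)"
  shows "far_commuting xs"
  unfolding far_commuting_def
proof (intro allI impI)
  fix i j assume ij: "i + 1 < j" "j < length xs"
  have "J (val (Br ((xs @ ys) ! i) ((xs @ ys) ! j)))"
    using assms ij unfolding far_commuting_def by simp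
  then show "J (val (Br (xs ! i) (xs ! j)))" using ij by (simp add: nth_append)
qed

lemma far_commuting_separated:
  assumes "far_commuting (A @ M @ C)" "M \<noteq> []" "x \<in> set A" "y \<in> set C"
  shows "J (val (Br x y))"
proof -
  obtain i where i: "i < length A" "A ! i = x" using assms(3) by (auto simp: in_set_conv_nth)
  obtain j where j: "j < length C" "C ! j = y" using assms(4) by (auto simp: in_set_conv_nth)
  let ?j = "length A + length M + j"
  have "(A @ M @ C) ! i = x" "(A @ M @ C) ! ?j = y" using i j by (simp_all add: nth_append)
  moreover have "i + 1 < ?j" using i assms(2) by (cases M) auto
  ultimately show ?thesis using assms(1) j unfolding far_commuting_def by fastforce
qed

lemma in_J_Br_subst_tree_right:
  "\<forall>y\<in>set (leaves Y). J (val (Br x y)) \<Longrightarrow> J (val (Br x (subst_tree Y)))"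
  by (induction Y) (auto intro: in_J_Br_right)

lemma in_J_Br_subst_tree:
  "\<forall>x\<in>set (leaves X). \<forall>y\<in>set (leaves Y). J (val (Br x y))
    \<Longrightarrow> J (val (Br (subst_tree X) (subst_tree Y)))"
  by (induction X) (auto intro: in_J_Br_left in_J_Br_subst_tree_right)

lemma val_Br_lnorm_cong:
  assumes "far_commuting (xs @ leaves Y)" "xs \<noteq> []"
  shows "val (Br (subst_tree (lnorm xs)) (subst_tree Y)) \<approx> val (subst_tree (lnorm (xs @ leaves Y)))"
  using assms
proof (induction Y arbitrary: xs)
  case (Lf y)
  then show ?case by (simp add: lnorm_snoc cong_refl)
next
  case (Br Y1 Y2)
  let ?L = "subst_tree (lnorm xs)"
  have far: "far_commuting ((xs @ leaves Y1) @ leaves Y2)" using Br.prems by simp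
  have "J (val (Br ?L (subst_tree Y2)))"
    using far_commuting_separated[of xs "leaves Y1" "leaves Y2"] Br.prems
    by (intro in_J_Br_subst_tree) (simp add: leaves_lnorm leaves_nonempty)
  then have "val (Br ?L (subst_tree (Br Y1 Y2))) \<approx> val (Br (Br ?L (subst_tree Y1)) (subst_tree Y2))"
    by (simp add: val_Br_assoc cong_sym)
  also have "\<dots> \<approx> val (Br (subst_tree (lnorm (xs @ leaves Y1))) (subst_tree Y2))"
    using Br.IH(1) far_commuting_appendD[OF far] Br.prems(2)
    by (intro val_Br_cong_left) (simp_all add: leaves_subst_tree leaves_lnorm)
  also have "\<dots> \<approx> val (subst_tree (lnorm (xs @ leaves (Br Y1 Y2))))"
    using Br.IH(2)[OF far] Br.prems(2) by simp
  finally show ?case .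
qed

lemma val_subst_tree_cong_lnorm:
  "far_commuting (leaves T) \<Longrightarrow> val (subst_tree T) \<approx> val (subst_tree (lnorm (leaves T)))"
proof (induction T)
  case (Lf x)
  then show ?case by (simp add: lnorm_single cong_refl)
next
  case (Br T1 T2)
  have "val (subst_tree (Br T1 T2)) \<approx> val (Br (subst_tree (lnorm (leaves T1))) (subst_tree T2))"
    using Br.IH(1) far_commuting_appendD Br.prems
    by (simp add: val_Br_cong_left leaves_subst_tree leaves_lnorm leaves_nonempty)
  also have "\<dots> \<approx> val (subst_tree (lnorm (leaves (Br T1 T2))))"
    using Br.prems by (simp add: val_Br_lnorm_cong leaves_nonempty)
  finally show ?case .
qed

theorem bracketing_independent:
  assumes "far_commuting xs" "leaves T1 = xs" "leaves T2 = xs"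
  shows "val (subst_tree T1) \<approx> val (subst_tree T2)"
  using val_subst_tree_cong_lnorm[of T1] val_subst_tree_cong_lnorm[of T2] assms
  by (metis cong_sym cong_trans)

end

section \<open>Vanishing brackets in U_q^+(sp_2n)\<close>

locale Uq_sp = skew_brackets chi g R
  for chi :: "nat \<Rightarrow> 'g::ab_group_add \<Rightarrow> 'k::field" and g R +
  fixes n :: nat and q :: 'k
  assumes R_eq: "R = bval chi g ` sp_rel_trees n"
    and q_nz: "q \<noteq> 0" and q_neq_minus_one: "q \<noteq> -1"
    and p_ii: "\<And>i. 1 \<le> i \<Longrightarrow> i < n \<Longrightarrow> chi i (g i) = q"
    and p_adj: "\<And>i. 1 < i \<Longrightarrow> i < n \<Longrightarrow> chi i (g (i-1)) * chi (i-1) (g i) = inverse q"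
    and p_far: "\<And>i j. 1 \<le> i \<Longrightarrow> i + 1 < j \<Longrightarrow> j \<le> n \<Longrightarrow> chi i (g j) * chi j (g i) = 1"
begin

lemma relation_in_J: "T \<in> sp_rel_trees n \<Longrightarrow> J (val T)"
  unfolding in_ideal_def coeff_bvalue R_eq
  by (rule ideal_gen_generator) (auto simp: coeff_bvalue[symmetric] coeff[simplified])

lemma far_letters_in_J: "1 \<le> i \<Longrightarrow> i + 1 < j \<Longrightarrow> j \<le> n \<Longrightarrow> J (val (Br (Lf i) (Lf j)))"
  by (rule relation_in_J) (auto simp: sp_rel_trees_def)

lemma far_letters_swapped_in_J: "1 \<le> i \<Longrightarrow> i + 1 < j \<Longrightarrow> j \<le> n \<Longrightarrow> J (val (Br (Lf j) (Lf i)))"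
  by (rule in_J_Br_swap[OF far_letters_in_J]) (auto simp: pp_eq mult.commute p_far)

lemma serre_left_in_J: "1 \<le> i \<Longrightarrow> i + 1 < n \<Longrightarrow> J (val (Br (Br (Lf i) (Lf (i+1))) (Lf (i+1))))"
  by (rule relation_in_J) (auto simp: sp_rel_trees_def)

lemma serre_right_in_J: "1 \<le> i \<Longrightarrow> i + 1 < n \<Longrightarrow> J (val (Br (Lf i) (Br (Lf i) (Lf (i+1)))))"
  by (rule relation_in_J) (auto simp: sp_rel_trees_def)

text \<open>The combination of relations below was found by comparing the coefficients of the
  twelve words of degree (1,2,1) in x_c, x_(c+1), x_(c+2); dividing by its leading
  coefficient is where q \<noteq> -1 is needed.\<close>

lemma triple_bracket_in_J:
  assumes c1: "1 \<le> c" and c3: "c + 3 \<le> n"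
  shows "J (val (Br (Br (Br (Lf c) (Lf (c+1))) (Lf (c+2))) (Lf (c+1))))"
proof -
  let ?x = "monomial [c] :: 'k fpoly" and ?a = "monomial [c+1] :: 'k fpoly"
    and ?b = "monomial [c+2] :: 'k fpoly"
  let ?R1 = "val (Br (Br (Lf c) (Lf (c+1))) (Lf (c+1)))"
    and ?R2 = "val (Br (Lf (c+1)) (Br (Lf (c+1)) (Lf (c+2))))"
    and ?R3 = "val (Br (Lf c) (Lf (c+2)))"
  define u where "u = chi c (g (c+1))"
  define t where "t = chi (c+1) (g (c+2))"
  define r where "r = chi c (g (c+2))"
  have u0: "u \<noteq> 0" and t0: "t \<noteq> 0" and r0: "r \<noteq> 0"
    using chi_nz by (auto simp: u_def t_def r_def)
  have q1: "1 + q \<noteq> 0" using q_neq_minus_one by (metis add.commute add_eq_0_iff)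
  have tq: "t + q * t \<noteq> 0" using q1 t0 by (metis distrib_right mult_1 no_zero_divisors)
  have e1: "chi c (g c) = q" and e2: "chi (Suc c) (g (Suc c)) = q"
    and e3: "chi (Suc (Suc c)) (g (Suc (Suc c))) = q"
    using p_ii c1 c3 by simp_all
  have e4: "chi (Suc c) (g c) = inverse q / u"
    using p_adj[of "Suc c"] c1 c3 u0 q_nz unfolding u_def by (simp add: field_simps)
  have e5: "chi (Suc (Suc c)) (g (Suc c)) = inverse q / t"
    using p_adj[of "Suc (Suc c)"] c1 c3 t0 q_nz unfolding t_def by (simp add: field_simps)
  have e6: "chi (Suc (Suc c)) (g c) = 1 / r"
    using p_far[of c "Suc (Suc c)"] c1 c3 r0 unfolding r_def by (simp add: field_simps)
  have u': "chi c (g (Suc c)) = u" and t': "chi (Suc c) (g (Suc (Suc c))) = t"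
    and r': "chi c (g (Suc (Suc c))) = r"
    by (simp_all add: u_def t_def r_def)
  have eq: "smult ((1+q)*t) (val (Br (Br (Br (Lf c) (Lf (c+1))) (Lf (c+2))) (Lf (c+1)))) =
      ?R1 * ?b + smult (-t*t*r) (?b * ?R1)
    + smult (u*u*r) (?R2 * ?x) + smult (-1) (?x * ?R2)
    + smult (q*t*t) (?R3 * ?a * ?a) + smult (-u*(1+q)*t) (?a * ?R3 * ?a)
    + smult (u*u) (?a * ?a * ?R3)"
    by (simp add: bvalue.simps skew_def pp_eq algebra_simps monomial_mult e1 e2 e3 e4 e5 e6
        u' t' r' u0 t0 r0 q1 q_nz, subst coeff_inject[symmetric])
      (simp add: fun_eq_iff field_simps u0 t0 r0 q1 q_nz tq)
  have "J ?R1" and "J ?R2" and "J ?R3"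
    using serre_left_in_J[of c] serre_right_in_J[of "c+1"] far_letters_in_J[of c "c+2"] c1 c3
    by simp_all
  then have "J (smult ((1+q)*t) (val (Br (Br (Br (Lf c) (Lf (c+1))) (Lf (c+2))) (Lf (c+1)))))"
    unfolding eq by (intro in_ideal_add in_ideal_smult in_ideal_mult_left in_ideal_mult_right)
  then show ?thesis by (rule in_ideal_smult_cancel[rotated]) (simp add: q1 t0)
qed

lemma v_tree_same: "v_tree k k = Lf k"
  by (simp add: v_tree_def)

lemma v_tree_Suc: "k \<le> l \<Longrightarrow> v_tree k (Suc l) = Br (v_tree k l) (Lf (Suc l))"
  by (simp add: v_tree_def)

lemma v_tree_far_letter_in_J:
  "1 \<le> k \<Longrightarrow> k \<le> l \<Longrightarrow> l + 2 \<le> j \<Longrightarrow> j \<le> n \<Longrightarrow> J (val (Br (v_tree k l) (Lf j)))"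
proof (induction l)
  case 0
  then show ?case by simp
next
  case (Suc l)
  show ?case
  proof (cases "k = Suc l")
    case True
    then show ?thesis using Suc.prems by (simp add: v_tree_same far_letters_in_J)
  next
    case False
    then show ?thesis
      using Suc far_letters_in_J[of "Suc l" j] by (simp add: v_tree_Suc in_J_Br_left)
  qed
qed

lemma v_tree_last_letter_in_J:
  assumes "1 \<le> k" "k < l" "l < n"
  shows "J (val (Br (v_tree k l) (Lf l)))"
proof (cases "l = k + 1")
  case True
  then show ?thesis using serre_left_in_J[of k] assms by (simp add: v_tree_Suc v_tree_same)
next
  case False
  define m where "m = l - 2"
  have m: "l = m + 2" "k \<le> m" using False assms by (auto simp: m_def)
  let ?D = "v_tree k m" and ?c = "Lf (m+1)" and ?a = "Lf (m+2)"
  have vt: "v_tree k l = Br (Br ?D ?c) ?a" using m by (simp add: v_tree_Suc)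
  have Da: "J (val (Br ?D ?a))" using v_tree_far_letter_in_J[of k m "m+2"] m assms by simp
  have "J (val (Br (Br ?c ?a) ?a))" using serre_left_in_J[of "m+1"] m assms by simp
  then have "J (val (Br (Br ?D (Br ?c ?a)) ?a))" using Da by (simp add: in_J_Br_left)
  then have "J (val (Br (Br (Br ?D ?c) ?a) ?a))"
    by (rule in_J_Br_cong_left[OF val_Br_assoc[OF Da], rotated]) simp
  then show ?thesis using vt m(1) by simp
qed

lemma v_tree_penultimate_letter_in_J:
  assumes "1 \<le> k" "k < j" "j + 1 < n"
  shows "J (val (Br (v_tree k (j+1)) (Lf j)))"
proof (cases "j = k + 1")
  case True
  then show ?thesis using triple_bracket_in_J[of k] assms by (simp add: v_tree_Suc v_tree_same)
next
  case False
  define m where "m = j - 2"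
  have m: "j = m + 2" "k \<le> m" using False assms by (auto simp: m_def)
  let ?D = "v_tree k m" and ?c = "Lf (m+1)" and ?a = "Lf (m+2)" and ?b = "Lf (m+3)"
  have vt: "v_tree k (j+1) = Br (Br (Br ?D ?c) ?a) ?b" using m by (simp add: v_tree_Suc)
  have Da: "J (val (Br ?D ?a))" and Db: "J (val (Br ?D ?b))"
    using v_tree_far_letter_in_J[of k m "m+2"] v_tree_far_letter_in_J[of k m "m+3"] m assms
    by simp_all
  have "val (Br (Br (Br ?D ?c) ?a) ?b) \<approx> val (Br (Br ?D (Br ?c ?a)) ?b)"
    by (rule val_Br_cong_left[OF val_Br_assoc[OF Da]]) simp
  also have "\<dots> \<approx> val (Br ?D (Br (Br ?c ?a) ?b))"
    by (rule val_Br_assoc[OF Db])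
  finally have assoc: "val (v_tree k (j+1)) \<approx> val (Br ?D (Br (Br ?c ?a) ?b))"
    unfolding vt .
  have "J (val (Br (Br (Br ?c ?a) ?b) ?a))"
    using triple_bracket_in_J[of "m+1"] m assms by (simp add: numeral_eq_Suc)
  then have "J (val (Br (Br ?D (Br (Br ?c ?a) ?b)) ?a))" using Da by (simp add: in_J_Br_left)
  then have "J (val (Br (v_tree k (j+1)) ?a))"
    by (rule in_J_Br_cong_left[OF assoc, rotated]) (use vt in simp)
  then show ?thesis using m(1) by simp
qed

lemma v_tree_letter_in_J:
  "1 \<le> k \<Longrightarrow> k < j \<Longrightarrow> j \<le> l \<Longrightarrow> l < n \<Longrightarrow> J (val (Br (v_tree k l) (Lf j)))"
proof (induction l arbitrary: j)
  case 0
  then show ?case by simp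
next
  case (Suc l)
  consider "j + 2 \<le> Suc l" | "j = Suc l" | "j + 1 = Suc l" using Suc.prems by linarith
  then show ?case
  proof cases
    case 1
    then show ?thesis
      using Suc far_letters_swapped_in_J[of j "Suc l"] by (simp add: v_tree_Suc in_J_Br_left)
  next
    case 2
    then show ?thesis using v_tree_last_letter_in_J Suc.prems by simp
  next
    case 3
    then show ?thesis using v_tree_penultimate_letter_in_J[of k j] Suc.prems by simp
  qed
qed

lemma nth_items:
  assumes "k < n" "n \<le> m" "1 \<le> p" "p < length (items n k m)"
  shows "items n k m ! p = Lf (n + 1 - p)"
proof -
  have p: "p - 1 < m + 1 - n" using assms by (simp add: items_def)
  then have "items n k m ! p = Lf (letter n (n + (p - 1)))"
    using assms by (simp add: items_def nth_Cons' del: upt_Suc)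
  also have "letter n (n + (p - 1)) = n + 1 - p"
    using assms by (auto simp: letter_def)
  finally show ?thesis .
qed

lemma far_commuting_items:
  assumes "1 \<le> k" "k < n" "n \<le> m" "m < 2 * n - k"
  shows "far_commuting (items n k m)"
  unfolding far_commuting_def
proof (intro allI impI)
  fix i j assume ij: "i + 1 < j" and j: "j < length (items n k m)"
  have len: "length (items n k m) = m + 2 - n" using assms by (simp add: items_def)
  have xj: "items n k m ! j = Lf (n + 1 - j)" using nth_items assms ij j by simp
  show "J (val (Br (items n k m ! i) (items n k m ! j)))"
  proof (cases "i = 0")
    case True
    then have "items n k m ! i = v_tree k (n - 1)" using assms by (simp add: items_def)
    then show ?thesis unfolding xj
      using v_tree_letter_in_J[of k "n + 1 - j" "n - 1"] assms ij j len by simp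
  next
    case False
    then have "items n k m ! i = Lf (n + 1 - i)" using nth_items assms ij j by simp
    then show ?thesis unfolding xj
      using far_letters_swapped_in_J[of "n + 1 - j" "n + 1 - i"] assms ij j len False by simp
  qed
qed

end

theorem lemma3p4:
  fixes chi :: "nat \<Rightarrow> 'g::ab_group_add \<Rightarrow> 'k::field"
    and g :: "nat \<Rightarrow> 'g" and q :: 'k and n k m :: nat
  assumes chi_hom: "\<And>i a b. chi i (a + b) = chi i a * chi i b"
    and chi_nz: "\<And>i a. chi i a \<noteq> 0"
    and n2: "2 \<le> n"
    and q_nz: "q \<noteq> 0" and q3: "q ^ 3 \<noteq> 1" and qm1: "q \<noteq> -1"
    and p_ii: "\<And>i. 1 \<le> i \<Longrightarrow> i < n \<Longrightarrow> chi i (g i) = q"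
    and p_nn: "chi n (g n) = q ^ 2"
    and p_adj: "\<And>i. 1 < i \<Longrightarrow> i < n \<Longrightarrow> chi i (g (i-1)) * chi (i-1) (g i) = inverse q"
    and p_last: "chi (n-1) (g n) * chi n (g (n-1)) = inverse (q ^ 2)"
    and p_far: "\<And>i j. 1 \<le> i \<Longrightarrow> i + 1 < j \<Longrightarrow> j \<le> n \<Longrightarrow> chi i (g j) * chi j (g i) = 1"
    and k1: "1 \<le> k" and kn: "k \<le> n" and nm: "n \<le> m" and mphi: "m < phi n k"
    and T1: "leaves T1 = items n k m" and T2: "leaves T2 = items n k m"
  shows "(\<lambda>w. bval chi g (subst_tree T1) w - bval chi g (subst_tree T2) w) \<in> Uq_ideal chi g n"
proof -
  interpret Uq_sp chi g "bval chi g ` sp_rel_trees n" n q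
    by unfold_locales (use chi_hom chi_nz q_nz qm1 p_ii p_adj p_far in auto)
  have "k < n" using nm mphi by (simp add: phi_def)
  then have "far_commuting (items n k m)"
    using far_commuting_items k1 nm mphi by (simp add: phi_def)
  then have "J (val (subst_tree T1) - val (subst_tree T2))"
    using bracketing_independent T1 T2 unfolding cong_J_def by blast
  then show ?thesis
    by (simp add: in_ideal_def minus_fpoly.rep_eq coeff_bvalue Uq_ideal_def)
qed

end
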